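(* Let $k\ge 1$ be an integer and $p>0$ a budget. For $j=1,\dots,k$ let $n_j>0$ (number of training samples of the $j$-th low-fidelity model) with $p-\sum_{j=1}^k n_j>0$, and let $\rho_j(n_j)\in[-1,1]$ and $w_j(n_j)>0$ be given numbers (correlation coefficient with the high-fidelity model and evaluation cost of the $j$-th low-fidelity model), with the conventions $n_0=0$, $\rho_0=1$, $w_0=1$, $\rho_{k+1}=0$, and assume $1=|\rho_0|>|\rho_1(n_1)|>\dots>|\rho_k(n_k)|$. Let $\sigma_0^2>0$. Suppose that for each $j=1,\dots,k$ there are constants $c_{a,j},c_{c,j}>0$, a positive, decreasing, at least twice continuously differentiable $r_{a,j}:(0,\infty)\to(0,\infty)$ and a positive, increasing, at least twice continuously differentiable $r_{c,j}:(0,\infty)\to(0,\infty)$ with $$1-\rho_j^2(n_j)\le c_{a,j}r_{a,j}(n_j),\qquad w_j(n_j)\le c_{c,j}r_{c,j}(n_j).$$ Define $$\mathrm{MSE}=\frac{\sigma_0^2}{p-\sum_{i=1}^k n_i}\left(\sum_{j=0}^k\sqrt{w_j(n_j)\big(\rho_j^2(n_j)-\rho_{j+1}^2(n_{j+1})\big)}\right)^2.$$ Then $$\mathrm{MSE}\le \frac{(k+1)\sigma_0^2}{p_{k-1}-n_k}\Big(\kappa_{k-1}+w_{k-1}(n_{k-1})\,c_{a,k}\,r_{a,k}(n_k)+c_{c,k}\,r_{c,k}(n_k)\Big),$$ where $$p_{k-1}=p-\sum_{j=1}^{k-1}n_j\ (p_0=p),\qquad \kappa_{k-1}=\sum_{j=0}^{k-2}w_j(n_j)\big(1-\rho_{j+1}^2(n_{j+1})\big)\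 (\kappa_0=0).$$
   Context: The quantity $\mathrm{MSE}$ is the mean-squared error of the context-aware multi-fidelity Monte Carlo estimator of $\mathbb{E}[f^{(0)}(\boldsymbol\Theta)]$ built from a high-fidelity model $f^{(0)}$ (output variance $\sigma_0^2$, cost $1$) and $k$ low-fidelity models $f^{(j)}_{n_j}$ trained with $n_j$ high-fidelity evaluations each, after optimal allocation of the remaining budget $p-\sum n_i$ to sampling. *)

theory Defs
  imports "HOL-Analysis.Analysis"
begin

definition twice_cont_diff_on :: "real set \<Rightarrow> (real \<Rightarrow> real) \<Rightarrow> bool" where
  "twice_cont_diff_on S f \<longleftrightarrow>
     (\<exists>f' f''. (\<forall>x\<in>S. (f has_real_derivative f' x) (at x)) \<and>
               (\<forall>x\<in>S. (f' has_real_derivative f'' x) (at x)) \<and>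
               continuous_on S f'')"

text \<open>Mean-squared error of the context-aware MFMC estimator after optimal allocation.
  rho j and w j stand for rho_j(n_j) and w_j(n_j); the conventions rho 0 = 1, w 0 = 1,
  rho (k+1) = 0 are imposed as hypotheses in the theorem.\<close>
definition MSE :: "real \<Rightarrow> real \<Rightarrow> nat \<Rightarrow> (nat \<Rightarrow> nat) \<Rightarrow> (nat \<Rightarrow> real) \<Rightarrow> (nat \<Rightarrow> real) \<Rightarrow> real" where
  "MSE \<sigma>2 p k n \<rho> w =
     \<sigma>2 / (p - (\<Sum>i=1..k. real (n i))) *
     (\<Sum>j=0..k. sqrt (w j * ((\<rho> j)\<^sup>2 - (\<rho> (j+1))\<^sup>2)))\<^sup>2"

end

theory Submission
  imports Defs
begin

text \<open>By Cauchy--Schwarz, the squared sum of the k + 1 square roots in MSE is at most k + 1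
  times the sum of the radicands w_j (rho_j^2 - rho_{j+1}^2). Since rho_j^2 <= 1, each radicand is
  at most w_j (1 - rho_{j+1}^2). The first k - 1 of these bounds add up to kappa_{k-1}; the last two,
  w_{k-1} (1 - rho_k^2) and w_k (as rho_{k+1} = 0), are controlled by the accuracy and cost bounds
  at j = k.\<close>

lemma sum_sqrt_squared_le_card_mult_sum:
  fixes a :: "'a \<Rightarrow> real"
  assumes "\<And>j. j \<in> A \<Longrightarrow> 0 \<le> a j"
  shows "(\<Sum>j\<in>A. sqrt (a j))\<^sup>2 \<le> real (card A) * (\<Sum>j\<in>A. a j)"
proof -
  have "(\<Sum>j\<in>A. sqrt (a j))\<^sup>2 \<le> (\<Sum>j\<in>A. (sqrt (a j))\<^sup>2) * card A"
    by (rule sum_squared_le_sum_of_squares)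
  also have "(\<Sum>j\<in>A. (sqrt (a j))\<^sup>2) = (\<Sum>j\<in>A. a j)"
    using assms by (intro sum.cong) auto
  finally show ?thesis
    by (simp add: mult.commute)
qed

lemma MSE_le_card_mult_sum:
  assumes "0 \<le> \<sigma>2" and "0 \<le> p - (\<Sum>i=1..k. real (n i))"
    and "\<And>j. j \<le> k \<Longrightarrow> 0 \<le> w j * ((\<rho> j)\<^sup>2 - (\<rho> (j+1))\<^sup>2)"
  shows "MSE \<sigma>2 p k n \<rho> w \<le> real (k+1) * \<sigma>2 / (p - (\<Sum>i=1..k. real (n i))) *
           (\<Sum>j=0..k. w j * ((\<rho> j)\<^sup>2 - (\<rho> (j+1))\<^sup>2))"
proof -
  have "(\<Sum>j=0..k. sqrt (w j * ((\<rho> j)\<^sup>2 - (\<rho> (j+1))\<^sup>2)))\<^sup>2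
          \<le> real (k+1) * (\<Sum>j=0..k. w j * ((\<rho> j)\<^sup>2 - (\<rho> (j+1))\<^sup>2))"
    using sum_sqrt_squared_le_card_mult_sum[of "{0..k}"] assms(3) by simp
  then have "\<sigma>2 / (p - (\<Sum>i=1..k. real (n i))) *
        (\<Sum>j=0..k. sqrt (w j * ((\<rho> j)\<^sup>2 - (\<rho> (j+1))\<^sup>2)))\<^sup>2
      \<le> \<sigma>2 / (p - (\<Sum>i=1..k. real (n i))) *
        (real (k+1) * (\<Sum>j=0..k. w j * ((\<rho> j)\<^sup>2 - (\<rho> (j+1))\<^sup>2)))"
    using assms(1,2) by (intro mult_left_mono) auto
  then show ?thesis
    unfolding MSE_def by (simp add: ac_simps)
qed

lemma sum_weighted_gap_le:
  fixes w \<rho> :: "nat \<Rightarrow> real"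
  assumes "\<And>j. j \<in> A \<Longrightarrow> 0 \<le> w j" and "\<And>j. j \<in> A \<Longrightarrow> (\<rho> j)\<^sup>2 \<le> 1"
  shows "(\<Sum>j\<in>A. w j * ((\<rho> j)\<^sup>2 - (\<rho> (j+1))\<^sup>2)) \<le> (\<Sum>j\<in>A. w j * (1 - (\<rho> (j+1))\<^sup>2))"
  using assms by (intro sum_mono mult_left_mono) auto

theorem lemma1:
  fixes k :: nat and p \<sigma>2 :: real and n :: "nat \<Rightarrow> nat"
    and \<rho> w c_a c_c :: "nat \<Rightarrow> real" and r_a r_c :: "nat \<Rightarrow> real \<Rightarrow> real"
  assumes k: "k \<ge> 1"
    and p: "p > 0"
    and n_pos: "\<forall>j\<in>{1..k}. n j > 0"
    and budget: "p - (\<Sum>j=1..k. real (n j)) > 0"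
    and n0: "n 0 = 0" and rho0: "\<rho> 0 = 1" and w0: "w 0 = 1" and rhok1: "\<rho> (k+1) = 0"
    and rho_range: "\<forall>j\<in>{1..k}. -1 \<le> \<rho> j \<and> \<rho> j \<le> 1"
    and w_pos: "\<forall>j\<in>{1..k}. w j > 0"
    and rho_dec: "\<forall>j<k. \<bar>\<rho> j\<bar> > \<bar>\<rho> (j+1)\<bar>"
    and sigma: "\<sigma>2 > 0"
    and c_pos: "\<forall>j\<in>{1..k}. c_a j > 0 \<and> c_c j > 0"
    and ra_pos: "\<forall>j\<in>{1..k}. \<forall>x>0. r_a j x > 0"
    and ra_dec: "\<forall>j\<in>{1..k}. \<forall>x y. 0 < x \<longrightarrow> x \<le> y \<longrightarrow> r_a j y \<le> r_a j x"
    and ra_C2: "\<forall>j\<in>{1..k}. twice_cont_diff_on {0<..} (r_a j)"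
    and rc_pos: "\<forall>j\<in>{1..k}. \<forall>x>0. r_c j x > 0"
    and rc_inc: "\<forall>j\<in>{1..k}. \<forall>x y. 0 < x \<longrightarrow> x \<le> y \<longrightarrow> r_c j x \<le> r_c j y"
    and rc_C2: "\<forall>j\<in>{1..k}. twice_cont_diff_on {0<..} (r_c j)"
    and acc: "\<forall>j\<in>{1..k}. 1 - (\<rho> j)\<^sup>2 \<le> c_a j * r_a j (real (n j))"
    and cost: "\<forall>j\<in>{1..k}. w j \<le> c_c j * r_c j (real (n j))"
  shows "MSE \<sigma>2 p k n \<rho> w \<le>
    real (k+1) * \<sigma>2 / ((p - (\<Sum>j=1..k-1. real (n j))) - real (n k)) *
      ((\<Sum>j=0..<k-1. w j * (1 - (\<rho> (j+1))\<^sup>2)) + w (k-1) * c_a k * r_a k (real (n k))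
        + c_c k * r_c k (real (n k)))"
proof -
  obtain m where m: "k = Suc m" using k by (cases k) auto
  have w_nonneg: "0 \<le> w j" if "j \<le> k" for j
    using w_pos w0 that by (cases "j = 0") (auto intro: less_imp_le)
  have rho_sq_le_one: "(\<rho> j)\<^sup>2 \<le> 1" if "j \<le> k" for j
    using rho_range rho0 that by (cases "j = 0") (auto simp: abs_square_le_1 abs_le_iff)
  have rho_sq_antimono: "(\<rho> (j+1))\<^sup>2 \<le> (\<rho> j)\<^sup>2" if "j \<le> k" for j
    using rho_dec rhok1 that by (cases "j = k") (auto simp flip: abs_le_square_iff intro: less_imp_le)
  let ?gap = "\<lambda>j. w j * ((\<rho> j)\<^sup>2 - (\<rho> (j+1))\<^sup>2)"
  let ?\<kappa> = "\<Sum>j=0..<k-1. w j * (1 - (\<rho> (j+1))\<^sup>2)"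
  let ?B = "?\<kappa> + w (k-1) * c_a k * r_a k (real (n k)) + c_c k * r_c k (real (n k))"
  let ?D = "p - (\<Sum>i=1..k. real (n i))"
  have D_eq: "(p - (\<Sum>j=1..k-1. real (n j))) - real (n k) = ?D"
    using m by simp
  have gaps_le: "(\<Sum>j=0..k. ?gap j) \<le> ?B"
  proof -
    have "(\<Sum>j=0..k. ?gap j) \<le> (\<Sum>j=0..k. w j * (1 - (\<rho> (j+1))\<^sup>2))"
      using w_nonneg rho_sq_le_one by (intro sum_weighted_gap_le) auto
    also have "\<dots> = ?\<kappa> + w (k-1) * (1 - (\<rho> k)\<^sup>2) + w k"
      using m rhok1 by (simp add: atLeast0AtMost atLeast0LessThan lessThan_Suc_atMost[symmetric])
    also have "\<dots> \<le> ?B"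
      using acc cost k w_nonneg[of "k-1"] by (auto simp: mult.assoc intro!: add_mono mult_left_mono)
    finally show ?thesis .
  qed
  have "MSE \<sigma>2 p k n \<rho> w \<le> real (k+1) * \<sigma>2 / ?D * (\<Sum>j=0..k. ?gap j)"
    using sigma budget w_nonneg rho_sq_antimono by (intro MSE_le_card_mult_sum) auto
  also have "\<dots> \<le> real (k+1) * \<sigma>2 / ?D * ?B"
    using gaps_le sigma budget by (intro mult_left_mono) auto
  finally show ?thesis
    unfolding D_eq .
qed

end
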